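(* Let $(S,M)$ be a surface with marked points and empty boundary and $T$ an ideal triangulation with property (T3). Then the adjacency quiver $Q$ of $T$ satisfies condition $(\star)$ if and only if $T$ has property (T3$\tfrac12$).
   Context: $(S,M)$: $S$ compact, connected, oriented surface without boundary, $M$ a finite non-empty set of punctures. Arcs incident to a puncture are counted with multiplicity (an arc with both ends at the puncture counted twice). Property (T3): at each puncture there are at least three arcs of $T$ incident to it. Property (T3$\tfrac12$): $T$ has (T3) and every arc of $T$ has an endpoint at which at least four arcs are incident. The adjacency quiver $Q$ has the arcs as vertices and an arrow $i\to j$ for each puncture $p$ and each occurrence of $j$ immediately following $i$ counterclockwise around $p$ (equivalently, for each corner at $p$ of a triangle with sides $i,j$). For such an arrow $\alpha$, $g(\alpha)$ is the arrow $j\to\ell$ where $\ell$ follows $j$ counterclockwise around $p$, and $f(\alpha)$ is the arrow $j\to k$ where $k$ is the third side of the triangle, at the other endpoint of $j$ in that triangle. $n_\alpha$ denotes the size of the $g$-orbit of $\alpha$, i.e. the least $r>0$ with $g^r(\alpha)=\alpha$. Condition $(\star)$: for every arrow $\alpha$, $n_\alpha\ge 4$ or $n_{f(\alpha)}\ge 4$. *)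

theory Defs
  imports Main
begin

text \<open>Combinatorial model of an ideal triangulation T of a compact connected oriented
surface without boundary with punctures M (all vertices are punctures).
D is the finite set of darts (oriented sides of triangles, each side of a triangle
oriented counterclockwise w.r.t. the triangle).  alpha: fixed-point free involution
pairing the two darts of the same arc (the two sides glued along an arc).
phi: next dart counterclockwise around the boundary of the same triangle (3-cycles).
Self-folded triangles are allowed (a triangle cycle may contain d and alpha d).\<close>

definition ideal_triangulation :: "'d set \<Rightarrow> ('d \<Rightarrow> 'd) \<Rightarrow> ('d \<Rightarrow> 'd) \<Rightarrow> bool" where
  "ideal_triangulation D alpha phi \<longleftrightarrow>
     finite D \<and> D \<noteq> {} \<and>
     (\<forall>d\<in>D. alpha d \<in> D \<and> alpha d \<noteq> d \<and> alpha (alpha d) = d) \<and>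
     (\<forall>d\<in>D. phi d \<in> D \<and> phi d \<noteq> d \<and> phi (phi (phi d)) = d) \<and>
     (\<forall>d\<in>D. \<forall>e\<in>D. (d, e) \<in> ({(x, alpha x) | x. x \<in> D} \<union> {(x, phi x) | x. x \<in> D})\<^sup>*)"

definition arc :: "('d \<Rightarrow> 'd) \<Rightarrow> 'd \<Rightarrow> 'd set" where
  "arc alpha d = {d, alpha d}"

definition arcs :: "'d set \<Rightarrow> ('d \<Rightarrow> 'd) \<Rightarrow> 'd set set" where
  "arcs D alpha = arc alpha ` D"

text \<open>Dart ends: (d, True) is the head of d, (d, False) its tail.  The head of d is
identified with the tail of phi d (same triangle) and with the tail of alpha d
(same arc, opposite orientation).\<close>
definition end_rel :: "'d set \<Rightarrow> ('d \<Rightarrow> 'd) \<Rightarrow> ('d \<Rightarrow> 'd) \<Rightarrow> (('d \<times> bool) \<times> ('d \<times> bool)) set" where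
  "end_rel D alpha phi =
     {((d, True), (phi d, False)) | d. d \<in> D} \<union> {((d, True), (alpha d, False)) | d. d \<in> D}"

definition end_equiv :: "'d set \<Rightarrow> ('d \<Rightarrow> 'd) \<Rightarrow> ('d \<Rightarrow> 'd) \<Rightarrow> (('d \<times> bool) \<times> ('d \<times> bool)) set" where
  "end_equiv D alpha phi = (end_rel D alpha phi \<union> (end_rel D alpha phi)\<inverse>)\<^sup>*"

definition punctures :: "'d set \<Rightarrow> ('d \<Rightarrow> 'd) \<Rightarrow> ('d \<Rightarrow> 'd) \<Rightarrow> ('d \<times> bool) set set" where
  "punctures D alpha phi = {end_equiv D alpha phi `` {(d, b)} | d b. d \<in> D}"

definition incid_mult :: "'d set \<Rightarrow> ('d \<times> bool) set \<Rightarrow> nat" where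
  "incid_mult a P = card {d \<in> a. (d, True) \<in> P}"

definition valency :: "'d set \<Rightarrow> ('d \<Rightarrow> 'd) \<Rightarrow> ('d \<times> bool) set \<Rightarrow> nat" where
  "valency D alpha P = (\<Sum>a\<in>arcs D alpha. incid_mult a P)"

definition T3 :: "'d set \<Rightarrow> ('d \<Rightarrow> 'd) \<Rightarrow> ('d \<Rightarrow> 'd) \<Rightarrow> bool" where
  "T3 D alpha phi \<longleftrightarrow> (\<forall>P\<in>punctures D alpha phi. valency D alpha P \<ge> 3)"

definition T3half :: "'d set \<Rightarrow> ('d \<Rightarrow> 'd) \<Rightarrow> ('d \<Rightarrow> 'd) \<Rightarrow> bool" where
  "T3half D alpha phi \<longleftrightarrow> T3 D alpha phi \<and>
     (\<forall>a\<in>arcs D alpha. \<exists>P\<in>punctures D alpha phi.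
         incid_mult a P \<ge> 1 \<and> valency D alpha P \<ge> 4)"

text \<open>Adjacency quiver: vertices are the arcs, arrows are the corners of triangles.
The corner at the head of dart d lies between the sides d and phi d of the triangle;
going counterclockwise around the puncture the side of d follows the side of phi d,
so this corner is an arrow  arc(phi d) \<rightarrow> arc(d).\<close>
definition q_arrows :: "'d set \<Rightarrow> 'd set" where
  "q_arrows D = D"

definition q_src :: "('d \<Rightarrow> 'd) \<Rightarrow> ('d \<Rightarrow> 'd) \<Rightarrow> 'd \<Rightarrow> 'd set" where
  "q_src alpha phi d = arc alpha (phi d)"

definition q_tgt :: "('d \<Rightarrow> 'd) \<Rightarrow> 'd \<Rightarrow> 'd set" where
  "q_tgt alpha d = arc alpha d"

text \<open>g: next corner counterclockwise around the same puncture, i.e. cross the side d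
into the neighbouring triangle (dart alpha d, starting at the puncture) and take the
dart of that triangle ending at the puncture, phi^{-1}(alpha d) = phi(phi(alpha d)).
f: the corner at the other endpoint of the side d in the same triangle, i.e. the corner
at the head of phi^{-1} d = phi (phi d).\<close>
definition q_g :: "('d \<Rightarrow> 'd) \<Rightarrow> ('d \<Rightarrow> 'd) \<Rightarrow> 'd \<Rightarrow> 'd" where
  "q_g alpha phi d = phi (phi (alpha d))"

definition q_f :: "('d \<Rightarrow> 'd) \<Rightarrow> 'd \<Rightarrow> 'd" where
  "q_f phi d = phi (phi d)"

definition n_orbit :: "('d \<Rightarrow> 'd) \<Rightarrow> ('d \<Rightarrow> 'd) \<Rightarrow> 'd \<Rightarrow> nat" where
  "n_orbit alpha phi d = (LEAST r. r > 0 \<and> (q_g alpha phi ^^ r) d = d)"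

definition star_cond :: "'d set \<Rightarrow> ('d \<Rightarrow> 'd) \<Rightarrow> ('d \<Rightarrow> 'd) \<Rightarrow> bool" where
  "star_cond D alpha phi \<longleftrightarrow>
     (\<forall>d\<in>q_arrows D. n_orbit alpha phi d \<ge> 4 \<or> n_orbit alpha phi (q_f phi d) \<ge> 4)"

end

theory Submission
  imports Defs "HOL-Combinatorics.Orbits"
begin

text \<open>The puncture at the head of a dart d consists of the heads of the darts in the
g-orbit of d and the tails of their partners; since the arcs partition the darts, its
valency is the size of that orbit.  The two endpoints of the arc of d are the heads of
d and of f(d), so condition (\<star>) at the arrow d says exactly that one endpoint of the
arc of d has valency at least four.\<close>

lemma self_in_orbit_if_bij_betw:
  assumes "bij_betw f S S" "finite S" "x \<in> S"
  shows "x \<in> orbit f x"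
proof -
  have "bij_betw (perm_restrict f S) S S"
    using assms(1) by (rule bij_betw_cong[THEN iffD1, rotated]) (simp add: perm_restrict_simps)
  then have perm: "perm_restrict f S permutes S"
    by (rule bij_imp_permutes) (simp add: perm_restrict_simps)
  then have "x \<in> orbit (perm_restrict f S) x"
    using assms(2) by (intro permutation_self_in_orbit permutes_imp_permutation)
  moreover have "orbit f x = orbit (perm_restrict f S) x"
    using assms(1,3) by (intro orbit_cong0[where A = S]) (auto simp: perm_restrict_simps bij_betwE)
  ultimately show ?thesis by simp
qed

lemma mem_orbit_if_image_mem_orbit:
  assumes "bij_betw f S S" "finite S" "y \<in> S" "f y \<in> orbit f x"
  shows "y \<in> orbit f x"
proof -
  have "y \<in> orbit f y" using assms(1-3) by (rule self_in_orbit_if_bij_betw)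
  then have "y \<in> orbit f (f y)" by (rule orbit_swap[OF _ orbit.base])
  then show ?thesis using assms(4) by (rule orbit_trans)
qed

lemma least_period_eq_card_orbit:
  assumes "x \<in> orbit f x"
  shows "(LEAST r. 0 < r \<and> (f ^^ r) x = x) = card (orbit f x)"
proof -
  have "card (orbit f x) = funpow_dist1 f x x"
    unfolding orbit_conv_funpow_dist1[OF assms] card_image[OF inj_on_funpow_dist1[OF assms]] by simp
  moreover have "(LEAST r. 0 < r \<and> (f ^^ r) x = x) = funpow_dist1 f x x"
  proof (rule Least_equality)
    show "0 < funpow_dist1 f x x \<and> (f ^^ funpow_dist1 f x x) x = x"
      using funpow_dist1_prop[OF assms] by simp
    show "funpow_dist1 f x x \<le> r" if "0 < r \<and> (f ^^ r) x = x" for r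
      using that funpow_dist1_least[of r f x x] by (auto simp: not_less[symmetric])
  qed
  ultimately show ?thesis by simp
qed

lemma sum_card_Int_disjoint_family:
  assumes "finite (\<Union>\<A>)" "pairwise disjnt \<A>" "B \<subseteq> \<Union>\<A>"
  shows "(\<Sum>a\<in>\<A>. card (a \<inter> B)) = card B"
proof -
  have "(\<Sum>a\<in>\<A>. card (a \<inter> B)) = card (\<Union>a\<in>\<A>. a \<inter> B)"
    using assms(1,2) finite_UnionD[OF assms(1)]
    by (intro card_UN_disjoint[symmetric])
      (auto simp: pairwise_def disjnt_def intro: finite_subset[of "_ \<inter> B" "\<Union>\<A>"])
  also have "(\<Union>a\<in>\<A>. a \<inter> B) = B" using assms(3) by blast
  finally show ?thesis .
qed

lemma equiv_end_equiv: "equiv UNIV (end_equiv D alpha phi)"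
  unfolding end_equiv_def
  by (intro equivI refl_rtrancl sym_rtrancl trans_rtrancl) (auto simp: sym_Un_converse)

locale triangulation =
  fixes D :: "'d set" and alpha phi :: "'d \<Rightarrow> 'd"
  assumes ideal: "ideal_triangulation D alpha phi"
begin

abbreviation g :: "'d \<Rightarrow> 'd" where "g \<equiv> q_g alpha phi"

abbreviation end_class :: "'d \<times> bool \<Rightarrow> ('d \<times> bool) set" where
  "end_class p \<equiv> end_equiv D alpha phi `` {p}"

lemma finite_darts: "finite D"
  using ideal unfolding ideal_triangulation_def by blast

lemma alpha_in [simp]: "d \<in> D \<Longrightarrow> alpha d \<in> D"
  and alpha_alpha [simp]: "d \<in> D \<Longrightarrow> alpha (alpha d) = d"
  and phi_in [simp]: "d \<in> D \<Longrightarrow> phi d \<in> D"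
  and phi_phi_phi [simp]: "d \<in> D \<Longrightarrow> phi (phi (phi d)) = d"
  using ideal unfolding ideal_triangulation_def by blast+

lemma bij_betw_g: "bij_betw g D D"
  by (rule bij_betw_byWitness[where f' = "\<lambda>d. alpha (phi d)"]) (auto simp: q_g_def)

lemma self_in_g_orbit: "x \<in> D \<Longrightarrow> x \<in> orbit g x"
  using bij_betw_g finite_darts by (rule self_in_orbit_if_bij_betw)

lemma g_orbit_subset: "x \<in> D \<Longrightarrow> orbit g x \<subseteq> D"
proof
  fix y assume "x \<in> D" "y \<in> orbit g x"
  from \<open>y \<in> orbit g x\<close> show "y \<in> D"
    by induction (use \<open>x \<in> D\<close> in \<open>simp_all add: q_g_def\<close>)
qed

lemma n_orbit_eq_card_orbit: "x \<in> D \<Longrightarrow> n_orbit alpha phi x = card (orbit g x)"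
  unfolding n_orbit_def by (intro least_period_eq_card_orbit self_in_g_orbit)

lemma end_class_eq_if_end_rel:
  "(p, q) \<in> end_rel D alpha phi \<Longrightarrow> end_class p = end_class q"
  using equiv_end_equiv by (rule equiv_class_eq) (auto simp: end_equiv_def)

lemma end_class_tail:
  assumes "d \<in> D"
  shows "end_class (d, False) = end_class (alpha d, True)"
    and "end_class (d, False) = end_class (phi (phi d), True)"
proof -
  have "((alpha d, True), (d, False)) \<in> end_rel D alpha phi"
    "((phi (phi d), True), (d, False)) \<in> end_rel D alpha phi"
    unfolding end_rel_def using assms by (force, force)
  then show "end_class (d, False) = end_class (alpha d, True)"
    "end_class (d, False) = end_class (phi (phi d), True)"
    by (simp_all add: end_class_eq_if_end_rel)
qed

lemma end_class_head_g:
  "d \<in> D \<Longrightarrow> end_class (g d, True) = end_class (d, True)"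
  using end_class_tail[of "alpha d"] by (simp add: q_g_def)

lemma end_class_head_alpha:
  "d \<in> D \<Longrightarrow> end_class (alpha d, True) = end_class (q_f phi d, True)"
  using end_class_tail[of d] by (simp add: q_f_def)

lemma punctures_eq: "punctures D alpha phi = (\<lambda>d. end_class (d, True)) ` D"
proof -
  have "end_class (d, b) \<in> (\<lambda>d. end_class (d, True)) ` D" if "d \<in> D" for d b
    using that end_class_tail(1)[OF that] by (cases b) auto
  then show ?thesis unfolding punctures_def by blast
qed

lemma end_class_head:
  assumes "x \<in> D"
  shows "end_class (x, True) = (\<lambda>e. (e, True)) ` orbit g x \<union> (\<lambda>e. (alpha e, False)) ` orbit g x"
    (is "_ = ?S")
proof
  let ?O = "orbit g x"
  have OD: "?O \<subseteq> D" using assms by (rule g_orbit_subset)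
  have "q \<in> ?S" if pq: "(p, q) \<in> end_rel D alpha phi \<union> (end_rel D alpha phi)\<inverse>" and "p \<in> ?S"
    for p q
  proof -
    from pq consider
        (out) d where "d \<in> D" "p = (d, True)" "q = (phi d, False) \<or> q = (alpha d, False)"
      | (into) d where "d \<in> D" "q = (d, True)" "p = (phi d, False) \<or> p = (alpha d, False)"
      unfolding end_rel_def by blast
    then show ?thesis
    proof cases
      case out
      then have "d \<in> ?O" using \<open>p \<in> ?S\<close> by auto
      moreover have "alpha (phi d) \<in> ?O"
        using bij_betw_g finite_darts by (rule mem_orbit_if_image_mem_orbit)
          (use out \<open>d \<in> ?O\<close> in \<open>simp_all add: q_g_def\<close>)
      ultimately show ?thesis using out by (force intro: image_eqI[where x = "alpha (phi d)"])
    next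
      case into
      then obtain e where e: "e \<in> ?O" "p = (alpha e, False)" using \<open>p \<in> ?S\<close> by auto
      then have "e \<in> D" using OD by blast
      from into e consider "phi d = alpha e" | "alpha d = alpha e" by auto
      then have "d = g e \<or> d = e"
        by cases (metis \<open>d \<in> D\<close> phi_phi_phi q_g_def, metis \<open>d \<in> D\<close> \<open>e \<in> D\<close> alpha_alpha)
      then show ?thesis using into e by (auto intro: orbit.step)
    qed
  qed
  then have "(end_rel D alpha phi \<union> (end_rel D alpha phi)\<inverse>) `` ?S \<subseteq> ?S" by blast
  then have "end_equiv D alpha phi `` ?S = ?S"
    unfolding end_equiv_def by (rule Image_closed_trancl)
  moreover have "(x, True) \<in> ?S" using self_in_g_orbit[OF assms] by blast
  ultimately show "end_class (x, True) \<subseteq> ?S" by blast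
next
  have head: "end_class (e, True) = end_class (x, True)" if "e \<in> orbit g x" for e
    using that
  proof (induction e rule: orbit.induct)
    case base
    then show ?case using assms by (rule end_class_head_g)
  next
    case (step e)
    then show ?case using g_orbit_subset[OF assms] by (simp add: end_class_head_g subset_iff)
  qed
  have "(e, True) \<in> end_class (x, True) \<and> (alpha e, False) \<in> end_class (x, True)"
    if "e \<in> orbit g x" for e
  proof -
    have "e \<in> D" using that g_orbit_subset[OF assms] by blast
    have self: "p \<in> end_class p" for p using equiv_class_self[OF equiv_end_equiv] by blast
    have "end_class (alpha e, False) = end_class (e, True)"
      using end_class_tail(1)[of "alpha e"] \<open>e \<in> D\<close> by simp
    then show ?thesis using self[of "(e, True)"] self[of "(alpha e, False)"] head[OF that] by blast
  qed
  then show "?S \<subseteq> end_class (x, True)" by blast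
qed

lemma arc_eq_if_mem: "d \<in> D \<Longrightarrow> e \<in> arc alpha d \<Longrightarrow> arc alpha e = arc alpha d"
  unfolding arc_def by auto

lemma pairwise_disjnt_arcs: "pairwise disjnt (arcs D alpha)"
proof (rule pairwiseI)
  fix a b assume "a \<in> arcs D alpha" "b \<in> arcs D alpha" "a \<noteq> b"
  then obtain d e where d: "d \<in> D" "a = arc alpha d" and e: "e \<in> D" "b = arc alpha e"
    unfolding arcs_def by blast
  have "arc alpha y = a" "arc alpha y = b" if "y \<in> a" "y \<in> b" for y
    using arc_eq_if_mem[OF d(1), of y] arc_eq_if_mem[OF e(1), of y] that d(2) e(2) by simp_all
  then show "disjnt a b" using \<open>a \<noteq> b\<close> unfolding disjnt_def by blast
qed

lemma Union_arcs: "\<Union>(arcs D alpha) = D"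
  unfolding arcs_def arc_def by auto

lemma valency_head:
  assumes "x \<in> D"
  shows "valency D alpha (end_class (x, True)) = n_orbit alpha phi x"
proof -
  have "incid_mult a (end_class (x, True)) = card (a \<inter> orbit g x)" for a
    unfolding incid_mult_def end_class_head[OF assms] by (rule arg_cong[where f = card]) auto
  then have "valency D alpha (end_class (x, True)) = (\<Sum>a\<in>arcs D alpha. card (a \<inter> orbit g x))"
    unfolding valency_def by simp
  also have "\<dots> = card (orbit g x)"
    using finite_darts g_orbit_subset[OF assms]
    by (intro sum_card_Int_disjoint_family pairwise_disjnt_arcs) (simp_all add: Union_arcs)
  finally show ?thesis using n_orbit_eq_card_orbit[OF assms] by simp
qed

lemma incident_arc_iff:
  assumes "d \<in> D" "y \<in> D"
  shows "0 < incid_mult (arc alpha d) (end_class (y, True)) \<longleftrightarrow>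
    end_class (y, True) = end_class (d, True) \<or> end_class (y, True) = end_class (q_f phi d, True)"
proof -
  have "0 < incid_mult (arc alpha d) (end_class (y, True)) \<longleftrightarrow>
      (\<exists>e\<in>arc alpha d. (e, True) \<in> end_class (y, True))"
    unfolding incid_mult_def arc_def by (auto simp: card_gt_0_iff)
  also have "\<dots> \<longleftrightarrow> (\<exists>e\<in>arc alpha d. end_class (y, True) = end_class (e, True))"
    using equiv_class_eq_iff[OF equiv_end_equiv[of D alpha phi]] by auto
  finally show ?thesis using assms by (simp add: arc_def end_class_head_alpha)
qed

lemma star_cond_iff_T3half:
  assumes "T3 D alpha phi"
  shows "star_cond D alpha phi \<longleftrightarrow> T3half D alpha phi"
proof -
  have "T3half D alpha phi \<longleftrightarrow> (\<forall>d\<in>D. \<exists>y\<in>D.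
      0 < incid_mult (arc alpha d) (end_class (y, True)) \<and> 4 \<le> valency D alpha (end_class (y, True)))"
    using assms by (simp add: T3half_def arcs_def punctures_eq Suc_le_eq)
  also have "\<dots> \<longleftrightarrow> (\<forall>d\<in>D. 4 \<le> valency D alpha (end_class (d, True)) \<or>
      4 \<le> valency D alpha (end_class (q_f phi d, True)))"
  proof (intro ball_cong refl)
    fix d assume "d \<in> D"
    moreover have "q_f phi d \<in> D" using \<open>d \<in> D\<close> by (simp add: q_f_def)
    ultimately show "(\<exists>y\<in>D. 0 < incid_mult (arc alpha d) (end_class (y, True)) \<and>
        4 \<le> valency D alpha (end_class (y, True))) \<longleftrightarrow>
      4 \<le> valency D alpha (end_class (d, True)) \<or> 4 \<le> valency D alpha (end_class (q_f phi d, True))"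
      by (auto simp: incident_arc_iff)
  qed
  also have "\<dots> \<longleftrightarrow> star_cond D alpha phi"
    by (simp add: star_cond_def q_arrows_def valency_head q_f_def)
  finally show ?thesis by simp
qed

end

theorem lemma2p5:
  fixes D :: "'d set" and alpha phi :: "'d \<Rightarrow> 'd"
  assumes "ideal_triangulation D alpha phi"
    and "T3 D alpha phi"
  shows "star_cond D alpha phi \<longleftrightarrow> T3half D alpha phi"
proof -
  interpret triangulation D alpha phi by (rule triangulation.intro) fact
  show ?thesis using assms(2) by (rule star_cond_iff_T3half)
qed

end
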